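(* Let $\phi$ be a continuous flow on a compact metric space $(X,d)$. Then $\phi$ is expansive if and only if every point of $X$ is uniformly-expansive.
   Context: A continuous flow is a continuous map $\phi:\mathbb{R}\times X\to X$, $\phi^t(x)=\phi(t,x)$, with $\phi^0=\mathrm{id}$, $\phi^{t+s}=\phi^s\circ\phi^t$; $O(x)=\{\phi^t(x):t\in\mathbb{R}\}$. A reparametrization is an increasing homeomorphism $h:\mathbb{R}\to\mathbb{R}$ with $h(0)=0$. $\phi$ is expansive if for every $\varepsilon>0$ there is $\delta>0$ such that whenever $x,y\in X$ and some reparametrization $h$ satisfy $d(\phi^t(x),\phi^{h(t)}(y))<\delta$ for all $t\in\mathbb{R}$, then $y=\phi^s(z)$ with $z\in O(x)$ and $|s|<\varepsilon$. A point $x$ is uniformly-expansive if there is a neighborhood $U$ of $x$ such that for every $\varepsilon>0$ there is $\delta>0$ such that whenever $y,z\in U$ and some reparametrization $h$ satisfies $d(\phi^t(y),\phi^{h(t)}(z))<\delta$ for all $t\in\mathbb{R}$, then $y=\phi^s(w)$ with $w\in O(z)$ and $|s|<\varepsilon$. *)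

theory Defs
  imports "HOL-Analysis.Analysis"
begin

definition cflow :: "'a::metric_space set \<Rightarrow> (real \<Rightarrow> 'a \<Rightarrow> 'a) \<Rightarrow> bool" where
  "cflow X phi \<longleftrightarrow>
     continuous_on (UNIV \<times> X) (\<lambda>(t, x). phi t x) \<and>
     (\<forall>t. \<forall>x\<in>X. phi t x \<in> X) \<and>
     (\<forall>x\<in>X. phi 0 x = x) \<and>
     (\<forall>t s. \<forall>x\<in>X. phi (t + s) x = phi s (phi t x))"

definition orbit :: "(real \<Rightarrow> 'a \<Rightarrow> 'a) \<Rightarrow> 'a \<Rightarrow> 'a set" where
  "orbit phi x = {phi t x | t. True}"

definition reparam :: "(real \<Rightarrow> real) \<Rightarrow> bool" where
  "reparam h \<longleftrightarrow> homeomorphism UNIV UNIV h (inv h) \<and> strict_mono h \<and> h 0 = 0"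

definition expansive_flow :: "'a::metric_space set \<Rightarrow> (real \<Rightarrow> 'a \<Rightarrow> 'a) \<Rightarrow> bool" where
  "expansive_flow X phi \<longleftrightarrow>
     (\<forall>\<epsilon>>0. \<exists>\<delta>>0. \<forall>x\<in>X. \<forall>y\<in>X. \<forall>h.
        reparam h \<and> (\<forall>t. dist (phi t x) (phi (h t) y) < \<delta>) \<longrightarrow>
        (\<exists>s z. z \<in> orbit phi x \<and> \<bar>s\<bar> < \<epsilon> \<and> y = phi s z))"

definition uniformly_expansive_point ::
    "'a::metric_space set \<Rightarrow> (real \<Rightarrow> 'a \<Rightarrow> 'a) \<Rightarrow> 'a \<Rightarrow> bool" where
  "uniformly_expansive_point X phi x \<longleftrightarrow>
     (\<exists>U. openin (top_of_set X) U \<and> x \<in> U \<and>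
        (\<forall>\<epsilon>>0. \<exists>\<delta>>0. \<forall>y\<in>U. \<forall>z\<in>U. \<forall>h.
           reparam h \<and> (\<forall>t. dist (phi t y) (phi (h t) z) < \<delta>) \<longrightarrow>
           (\<exists>s w. w \<in> orbit phi z \<and> \<bar>s\<bar> < \<epsilon> \<and> y = phi s w)))"

end

theory Submission
  imports Defs
begin

text \<open>As formalized, the conclusion of both expansiveness notions, \<open>y = phi s w\<close> with
  \<open>w \<in> orbit phi z\<close> and \<open>\<bar>s\<bar> < \<epsilon>\<close>, just says \<open>y \<in> orbit phi z\<close>. Both notions therefore
  ask that pairs of points whose orbits stay \<open>\<delta>\<close>-close up to reparametrization lie on a
  common orbit; expansiveness asks this on all of \<open>X\<close>, uniform expansiveness of every point
  asks it near each point. The local condition gives the global one by compactness: a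
  Lebesgue number of a finite subcover bounds \<open>dist y z\<close>, which is the distance of the
  orbits at time \<open>0\<close>.\<close>

lemma orbit_in_flow_set:
  assumes "cflow X phi" "z \<in> X" "y \<in> orbit phi z"
  shows "y \<in> X"
  using assms unfolding cflow_def orbit_def by blast

lemma flow_in_orbit:
  assumes "cflow X phi" "z \<in> X" "w \<in> orbit phi z"
  shows "phi s w \<in> orbit phi z"
proof -
  from assms(3) obtain t where "w = phi t z" unfolding orbit_def by blast
  then have "phi s w = phi (t + s) z" using assms(1,2) unfolding cflow_def by simp
  then show ?thesis unfolding orbit_def by blast
qed

lemma orbit_sym:
  assumes "cflow X phi" "z \<in> X" "y \<in> orbit phi z"
  shows "z \<in> orbit phi y"
proof -
  from assms(3) obtain t where t: "y = phi t z" unfolding orbit_def by blast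
  have "phi (-t) y = phi (t + - t) z" using assms(1,2) t unfolding cflow_def by metis
  also have "\<dots> = z" using assms(1,2) unfolding cflow_def by simp
  finally show ?thesis unfolding orbit_def by blast
qed

lemma near_orbit_iff_orbit:
  assumes "cflow X phi" "z \<in> X" "\<epsilon> > 0"
  shows "(\<exists>s w. w \<in> orbit phi z \<and> \<bar>s\<bar> < \<epsilon> \<and> y = phi s w) \<longleftrightarrow> y \<in> orbit phi z"
proof
  assume "\<exists>s w. w \<in> orbit phi z \<and> \<bar>s\<bar> < \<epsilon> \<and> y = phi s w"
  then show "y \<in> orbit phi z" using flow_in_orbit[OF assms(1,2)] by blast
next
  assume y: "y \<in> orbit phi z"
  then have "y = phi 0 y"
    using orbit_in_flow_set[OF assms(1,2)] assms(1) unfolding cflow_def by simp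
  then show "\<exists>s w. w \<in> orbit phi z \<and> \<bar>s\<bar> < \<epsilon> \<and> y = phi s w"
    using y assms(3) by (intro exI[of _ 0] exI[of _ y]) simp
qed

definition separates_orbits :: "(real \<Rightarrow> 'a::metric_space \<Rightarrow> 'a) \<Rightarrow> 'a set \<Rightarrow> real \<Rightarrow> bool" where
  "separates_orbits phi U \<delta> \<longleftrightarrow>
     (\<forall>y\<in>U. \<forall>z\<in>U. \<forall>h. reparam h \<and> (\<forall>t. dist (phi t y) (phi (h t) z) < \<delta>) \<longrightarrow>
        y \<in> orbit phi z)"

lemma separates_orbits_mono:
  assumes "separates_orbits phi U \<delta>" "V \<subseteq> U" "\<delta>' \<le> \<delta>"
  shows "separates_orbits phi V \<delta>'"
  using assms unfolding separates_orbits_def by (meson less_le_trans subsetD)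

lemma expansive_flow_iff_separates_orbits:
  assumes "cflow X phi"
  shows "expansive_flow X phi \<longleftrightarrow> (\<exists>\<delta>>0. separates_orbits phi X \<delta>)"
proof -
  have "(\<exists>s z. z \<in> orbit phi x \<and> \<bar>s\<bar> < \<epsilon> \<and> y = phi s z) \<longleftrightarrow> x \<in> orbit phi y"
    if "x \<in> X" "y \<in> X" "\<epsilon> > 0" for x y \<epsilon>
    using near_orbit_iff_orbit[OF assms] orbit_sym[OF assms] that by blast
  then show ?thesis
    unfolding expansive_flow_def separates_orbits_def by (simp add: gt_ex cong: ball_cong)
qed

lemma uniformly_expansive_point_iff_separates_orbits:
  assumes "cflow X phi"
  shows "uniformly_expansive_point X phi x \<longleftrightarrow>
    (\<exists>U. openin (top_of_set X) U \<and> x \<in> U \<and> (\<exists>\<delta>>0. separates_orbits phi U \<delta>))"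
proof -
  have "(\<forall>\<epsilon>>0. \<exists>\<delta>>0. \<forall>y\<in>U. \<forall>z\<in>U. \<forall>h.
           reparam h \<and> (\<forall>t. dist (phi t y) (phi (h t) z) < \<delta>) \<longrightarrow>
           (\<exists>s w. w \<in> orbit phi z \<and> \<bar>s\<bar> < \<epsilon> \<and> y = phi s w))
        \<longleftrightarrow> (\<exists>\<delta>>0. separates_orbits phi U \<delta>)"
    if "U \<subseteq> X" for U
  proof -
    have "(\<exists>s w. w \<in> orbit phi z \<and> \<bar>s\<bar> < \<epsilon> \<and> y = phi s w) \<longleftrightarrow> y \<in> orbit phi z"
      if "z \<in> U" "\<epsilon> > 0" for y z \<epsilon>
      using near_orbit_iff_orbit[OF assms] \<open>U \<subseteq> X\<close> that by blast
    then show ?thesis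
      unfolding separates_orbits_def by (simp add: gt_ex cong: ball_cong)
  qed
  then show ?thesis
    unfolding uniformly_expansive_point_def
    by (intro ex_cong1 conj_cong refl) (simp add: openin_imp_subset)
qed

lemma separates_orbits_compact:
  assumes "compact X" "cflow X phi"
    and local: "\<forall>x\<in>X. \<exists>U. openin (top_of_set X) U \<and> x \<in> U \<and> (\<exists>\<delta>>0. separates_orbits phi U \<delta>)"
  shows "\<exists>\<delta>>0. separates_orbits phi X \<delta>"
proof -
  have "\<forall>x\<in>X. \<exists>V \<Delta>. open V \<and> x \<in> V \<and> \<Delta> > 0 \<and> separates_orbits phi (X \<inter> V) \<Delta>"
    using local unfolding openin_open by blast
  then obtain V \<Delta> where V: "\<And>x. x \<in> X \<Longrightarrow> open (V x) \<and> x \<in> V x \<and> \<Delta> x > 0 \<and>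
      separates_orbits phi (X \<inter> V x) (\<Delta> x)"
    by metis
  obtain F where F: "F \<subseteq> X" "finite F" "X \<subseteq> (\<Union>x\<in>F. V x)"
    using compactE_image[OF assms(1), of X V] V by blast
  obtain e where e: "e > 0" "\<And>y. y \<in> X \<Longrightarrow> \<exists>G \<in> V ` F. ball y e \<subseteq> G"
    using Heine_Borel_lemma[OF assms(1), of "V ` F"] F V by blast
  define \<delta> where "\<delta> = Min (insert e (\<Delta> ` F))"
  have "\<delta> > 0" unfolding \<delta>_def using e(1) F V by auto
  moreover have "separates_orbits phi X \<delta>"
    unfolding separates_orbits_def
  proof (intro ballI allI impI)
    fix y z h assume yz: "y \<in> X" "z \<in> X"
      and close: "reparam h \<and> (\<forall>t. dist (phi t y) (phi (h t) z) < \<delta>)"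
    have "dist y z < \<delta>"
      using close[THEN conjunct2, rule_format, of 0] close yz assms(2)
      unfolding reparam_def cflow_def by simp
    then have "z \<in> ball y e" unfolding \<delta>_def using F(2) by (simp add: dist_commute)
    moreover obtain p where "p \<in> F" "ball y e \<subseteq> V p" using e(2)[OF yz(1)] by blast
    ultimately have p: "p \<in> F" "y \<in> V p" "z \<in> V p" using e(1) by auto
    have "\<delta> \<le> \<Delta> p" unfolding \<delta>_def using F(2) p(1) by simp
    then have "separates_orbits phi (X \<inter> V p) \<delta>"
      using V[of p] F(1) p(1) separates_orbits_mono by blast
    then show "y \<in> orbit phi z"
      using yz p close unfolding separates_orbits_def by blast
  qed
  ultimately show ?thesis by blast
qed

theorem mainTheorem5:
  fixes X :: "'a::metric_space set" and phi :: "real \<Rightarrow> 'a \<Rightarrow> 'a"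
  assumes "compact X" and "cflow X phi"
  shows "expansive_flow X phi \<longleftrightarrow> (\<forall>x\<in>X. uniformly_expansive_point X phi x)"
  unfolding expansive_flow_iff_separates_orbits[OF assms(2)]
    uniformly_expansive_point_iff_separates_orbits[OF assms(2)]
proof
  show "\<forall>x\<in>X. \<exists>U. openin (top_of_set X) U \<and> x \<in> U \<and> (\<exists>\<delta>>0. separates_orbits phi U \<delta>)"
    if "\<exists>\<delta>>0. separates_orbits phi X \<delta>"
    using that openin_subtopology_self by blast
qed (rule separates_orbits_compact[OF assms])

end
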